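(* Let $k\ge 1$ and $n>\binom{k}{2}$. If $F_1,\ldots,F_k$ are subgraphs (sets of edges) of the complete bipartite graph $K_{n,n}$ satisfying $|F_i|\ge in$ for all $i\le k$, then $(F_1,\ldots,F_k)$ has a rainbow matching, i.e. there exist pairwise disjoint edges $e_1,\ldots,e_k$ with $e_i\in F_i$ for each $i$.
   Context: A rainbow matching for $(F_1,\ldots,F_k)$ is a choice of pairwise disjoint edges $e_i\in F_i$, one from each $F_i$. *)

theory Defs
  imports Main
begin

text \<open>Edges of the complete bipartite graph K_{n,n}: pairs (a,b) with a a left vertex
  and b a right vertex, both sides indexed by {0..<n}.\<close>
definition bip_edges :: "nat \<Rightarrow> (nat \<times> nat) set" where
  "bip_edges n = {0..<n} \<times> {0..<n}"

definition edges_disjoint :: "nat \<times> nat \<Rightarrow> nat \<times> nat \<Rightarrow> bool" where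
  "edges_disjoint e f \<longleftrightarrow> fst e \<noteq> fst f \<and> snd e \<noteq> snd f"

definition rainbow_matching :: "nat \<Rightarrow> (nat \<Rightarrow> (nat \<times> nat) set) \<Rightarrow> (nat \<Rightarrow> nat \<times> nat) \<Rightarrow> bool" where
  "rainbow_matching k F e \<longleftrightarrow>
     (\<forall>i\<in>{1..k}. e i \<in> F i) \<and>
     (\<forall>i\<in>{1..k}. \<forall>j\<in>{1..k}. i \<noteq> j \<longrightarrow> edges_disjoint (e i) (e j))"

end

theory Submission
  imports Defs
begin

text \<open>We prove the stronger statement in which each bound is only required up to a deficit D,
  i.e. i n \<le> |F_i| + D, provided n > C(k,2) + D, by induction on k. Some F_i has a left vertex
  of degree at least k (for i = k this is forced by |F_k| \<ge> kn - D > (k-1)n); let j be the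
  least such i and v that vertex. Delete v from all graphs and drop F_j: graphs before j lose at
  most k - 1 edges by minimality of j, and graphs after j move down one index, so they lose at most
  n edges but need n fewer. The remaining k - 1 graphs thus satisfy the hypothesis with deficit
  D + k - 1, and C(k-1,2) + k - 1 = C(k,2). Their rainbow matching uses at most k - 1 right vertices,
  so one of the at least k neighbours of v in F_j is free and completes the matching.\<close>

lemma finite_bip_edges [simp]: "finite (bip_edges n)"
  by (simp add: bip_edges_def)

lemma card_Image_le:
  assumes "F \<subseteq> bip_edges n"
  shows "card (F `` {v}) \<le> n"
proof -
  have "F `` {v} \<subseteq> {0..<n}"
    using assms by (auto simp: bip_edges_def)
  then show ?thesis
    using card_mono[of "{0..<n}"] by fastforce
qed

lemma card_eq_sum_card_Image:
  assumes "F \<subseteq> bip_edges n"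
  shows "card F = (\<Sum>v<n. card (F `` {v}))"
proof -
  have "F = Sigma {..<n} (\<lambda>v. F `` {v})"
    using assms by (auto simp: bip_edges_def)
  moreover have "\<forall>v\<in>{..<n}. finite (F `` {v})"
    using assms finite_subset[OF Image_mono, of F "bip_edges n"] by (auto simp: finite_Image)
  ultimately show ?thesis
    by (metis card_SigmaI finite_lessThan)
qed

lemma card_eq_card_Diff_row:
  assumes "finite F"
  shows "card F = card (F - {v} \<times> UNIV) + card (F `` {v})"
proof -
  have "F \<inter> {v} \<times> UNIV = {v} \<times> F `` {v}"
    by auto
  then show ?thesis
    using card_Int_Diff[OF assms, of "{v} \<times> UNIV"] by (simp add: card_cartesian_product_singleton)
qed

lemma card_Diff_row_ge:
  assumes "F \<subseteq> bip_edges n" and "i * n \<le> card F + D" and "card (F `` {v}) \<le> c"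
  shows "i * n \<le> card (F - {v} \<times> UNIV) + (D + c)"
  using assms card_eq_card_Diff_row[OF finite_subset[OF assms(1)], of v] by simp

lemma exists_high_degree_vertex:
  assumes "F \<subseteq> bip_edges n" and "n * m < card F"
  shows "\<exists>v. m < card (F `` {v})"
proof (rule ccontr)
  assume "\<nexists>v. m < card (F `` {v})"
  then have "card F \<le> (\<Sum>v<n. m)"
    unfolding card_eq_sum_card_Image[OF assms(1)] by (intro sum_mono) (simp add: not_less)
  with assms(2) show False
    by simp
qed

lemma exists_edge_disjoint_from:
  assumes "m < card (H `` {v})" and "\<forall>s\<in>{1..m}. fst (e s) \<noteq> v"
  shows "\<exists>u. (v, u) \<in> H \<and> (\<forall>s\<in>{1..m}. edges_disjoint (v, u) (e s))"
proof -
  have "card ((\<lambda>s. snd (e s)) ` {1..m}) \<le> m"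
    using card_image_le[of "{1..m}" "\<lambda>s. snd (e s)"] by simp
  then have "\<not> H `` {v} \<subseteq> (\<lambda>s. snd (e s)) ` {1..m}"
    using assms(1) card_mono[of "(\<lambda>s. snd (e s)) ` {1..m}" "H `` {v}"] by auto
  then show ?thesis
    using assms(2) by (auto simp: edges_disjoint_def)
qed

lemma rainbow_matching_insert:
  assumes e: "rainbow_matching m G e"
    and j: "j \<in> {1..Suc m}"
    and G: "\<forall>s\<in>{1..m}. G s \<subseteq> F (if s < j then s else Suc s)"
    and x: "x \<in> F j"
    and x_disjoint: "\<forall>s\<in>{1..m}. edges_disjoint x (e s)"
  shows "rainbow_matching (Suc m) F (\<lambda>i. if i = j then x else e (if i < j then i else i - 1))"
proof -
  define \<sigma> where "\<sigma> i = (if i < j then i else i - 1)" for i :: nat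
  have \<sigma>_range: "\<sigma> i \<in> {1..m}" if "i \<in> {1..Suc m}" "i \<noteq> j" for i
    using that j by (auto simp: \<sigma>_def)
  have \<sigma>_G: "G (\<sigma> i) \<subseteq> F i" if "i \<in> {1..Suc m}" "i \<noteq> j" for i
  proof -
    have "(if \<sigma> i < j then \<sigma> i else Suc (\<sigma> i)) = i"
      using that j by (auto simp: \<sigma>_def)
    then show ?thesis
      using G \<sigma>_range[OF that] by metis
  qed
  have \<sigma>_inj: "\<sigma> i \<noteq> \<sigma> i'" if "i \<noteq> j" "i' \<noteq> j" "i \<noteq> i'" for i i'
    using that j by (auto simp: \<sigma>_def)
  have e_in: "e s \<in> G s" if "s \<in> {1..m}" for s
    using e that by (simp add: rainbow_matching_def)
  have e_disjoint: "edges_disjoint (e s) (e s')" if "s \<in> {1..m}" "s' \<in> {1..m}" "s \<noteq> s'" for s s'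
    using e that by (simp add: rainbow_matching_def)
  have disjoint_sym: "edges_disjoint a b \<Longrightarrow> edges_disjoint b a" for a b
    by (auto simp: edges_disjoint_def)
  show ?thesis
    unfolding rainbow_matching_def \<sigma>_def[symmetric]
  proof (intro conjI ballI impI)
    fix i assume "i \<in> {1..Suc m}"
    then show "(if i = j then x else e (\<sigma> i)) \<in> F i"
      using x e_in \<sigma>_range \<sigma>_G by auto
  next
    fix i i' assume "i \<in> {1..Suc m}" "i' \<in> {1..Suc m}" "i \<noteq> i'"
    then show "edges_disjoint (if i = j then x else e (\<sigma> i)) (if i' = j then x else e (\<sigma> i'))"
      using x_disjoint e_disjoint \<sigma>_range \<sigma>_inj disjoint_sym by auto
  qed
qed

lemma rainbow_matching_with_deficit:
  assumes "(k choose 2) + D < n"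
    and "\<forall>i\<in>{1..k}. F i \<subseteq> bip_edges n"
    and "\<forall>i\<in>{1..k}. i * n \<le> card (F i) + D"
  shows "\<exists>e. rainbow_matching k F e"
  using assms
proof (induction k arbitrary: D F)
  case 0
  then show ?case
    by (simp add: rainbow_matching_def)
next
  case (Suc m)
  note sub = Suc.prems(2) and large = Suc.prems(3)
  define P where "P i \<longleftrightarrow> 1 \<le> i \<and> (\<exists>v. m < card (F i `` {v}))" for i
  have "P (Suc m)"
  proof -
    have "Suc m * n \<le> card (F (Suc m)) + D" and "D < n"
      using large[rule_format, of "Suc m"] Suc.prems(1) by simp_all
    then have "n * m < card (F (Suc m))"
      by (simp add: algebra_simps)
    then show ?thesis
      using exists_high_degree_vertex[OF sub[rule_format, of "Suc m"]] by (simp add: P_def)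
  qed
  then obtain j where "P j" and j_least: "\<forall>i<j. \<not> P i"
    using exists_least_iff[of P] by blast
  then have "j \<le> Suc m"
    using \<open>P (Suc m)\<close> not_less by blast
  with \<open>P j\<close> obtain v where j: "j \<in> {1..Suc m}" and deg_v: "m < card (F j `` {v})"
    by (auto simp: P_def)
  define G where "G s = F (if s < j then s else Suc s) - {v} \<times> UNIV" for s
  have G_sub: "\<forall>s\<in>{1..m}. G s \<subseteq> bip_edges n"
    using sub by (auto simp: G_def)
  have G_large: "\<forall>s\<in>{1..m}. s * n \<le> card (G s) + (D + m)"
  proof
    fix s assume s: "s \<in> {1..m}"
    show "s * n \<le> card (G s) + (D + m)"
    proof (cases "s < j")
      case True
      then have "card (F s `` {v}) \<le> m"
        using j_least s by (simp add: P_def not_less)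
      then show ?thesis
        using card_Diff_row_ge[of "F s" n s D v m] sub large s True by (simp add: G_def)
    next
      case False
      have "Suc s * n \<le> card (G s) + (D + n)"
        using card_Diff_row_ge[of "F (Suc s)" n "Suc s" D v n] card_Image_le[of "F (Suc s)" n v]
          sub[rule_format, of "Suc s"] large[rule_format, of "Suc s"] s False by (simp add: G_def)
      then show ?thesis
        by simp
    qed
  qed
  have "(m choose 2) + (D + m) < n"
    using Suc.prems(1) by (simp add: numeral_2_eq_2)
  then obtain e where e: "rainbow_matching m G e"
    using Suc.IH[OF _ G_sub G_large] by blast
  have "\<forall>s\<in>{1..m}. fst (e s) \<noteq> v"
    using e by (auto simp: rainbow_matching_def G_def mem_Times_iff)
  then obtain u where u: "(v, u) \<in> F j" and vu_disjoint: "\<forall>s\<in>{1..m}. edges_disjoint (v, u) (e s)"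
    using exists_edge_disjoint_from[OF deg_v] by blast
  have G_F: "\<forall>s\<in>{1..m}. G s \<subseteq> F (if s < j then s else Suc s)"
    by (auto simp: G_def)
  show ?case
    using rainbow_matching_insert[OF e j G_F u vu_disjoint] by blast
qed

theorem theorem10p3:
  fixes k n :: nat and F :: "nat \<Rightarrow> (nat \<times> nat) set"
  assumes "k \<ge> 1" and "n > k choose 2"
    and "\<forall>i\<in>{1..k}. F i \<subseteq> bip_edges n"
    and "\<forall>i\<in>{1..k}. card (F i) \<ge> i * n"
  shows "\<exists>e. rainbow_matching k F e"
  using rainbow_matching_with_deficit[of k 0 n F] assms by simp

end
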